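(* Let $2\le R\le K$, $\epsilon\in(0,1)$, and let $\mathcal{Y}_1,\ldots,\mathcal{Y}_m\subseteq[K]$ with $|\mathcal{Y}_i|=R$ for all $i$. Let $Z$ be uniform on $[K]$ and let $Y=(Y_1,\ldots,Y_m)$ be such that, conditionally on $Z=k$, the $Y_i$ are independent, with $Y_i=k$ almost surely if $k\in\mathcal{Y}_i$ and $Y_i$ uniform on $\mathcal{Y}_i$ if $k\notin\mathcal{Y}_i$. If some decoder $g:\mathcal{Y}_1\times\cdots\times\mathcal{Y}_m\to[K]$ satisfies $\mathbb{P}(g(Y)\ne Z)\le\epsilon$, then $$m\ \ge\ \left\lceil \frac{K}{R}\cdot\frac{(1-\epsilon)\log K-\log 2}{\log R}\right\rceil.$$
   Context: $[K]=\{1,\ldots,K\}$; $\log$ denotes the natural logarithm. *)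

theory Defs
  imports "HOL-Probability.Probability"
begin

definition obs_pmf :: "nat set \<Rightarrow> nat \<Rightarrow> nat pmf" where
  "obs_pmf S k = (if k \<in> S then return_pmf k else pmf_of_set S)"

text \<open>Y is a function on {..<m}
  (value undefined outside), i.e. an element of PiE {..<m} Ys.\<close>
definition joint_pmf :: "nat \<Rightarrow> nat \<Rightarrow> (nat \<Rightarrow> nat set) \<Rightarrow> (nat \<times> (nat \<Rightarrow> nat)) pmf" where
  "joint_pmf K m Ys =
     pmf_of_set {1..K} \<bind> (\<lambda>k.
       Pi_pmf {..<m} undefined (\<lambda>i. obs_pmf (Ys i) k) \<bind> (\<lambda>y.
         return_pmf (k, y)))"

definition err_prob :: "nat \<Rightarrow> nat \<Rightarrow> (nat \<Rightarrow> nat set) \<Rightarrow> ((nat \<Rightarrow> nat) \<Rightarrow> nat) \<Rightarrow> real" where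
  "err_prob K m Ys g = measure_pmf.prob (joint_pmf K m Ys) {(k, y). g y \<noteq> k}"

end

theory Submission
  imports Defs
begin

text \<open>Compare the joint law \<open>P\<close> of \<open>(Z, Y)\<close> with the uniform law on
  \<open>[K] \<times> \<Y>\<^sub>1 \<times> \<dots> \<times> \<Y>\<^sub>m\<close> through the divergence \<open>D = KL(P \<parallel> uniform)\<close>.
  Given \<open>Z = k\<close>, each coordinate \<open>i\<close> with \<open>k \<in> \<Y>\<^sub>i\<close> makes the observed value at most
  \<open>R\<close> times likelier than uniform, and the other coordinates are exactly uniform; since a
  label lies on average in \<open>m R / K\<close> of the sets, \<open>D \<le> m R log R / K\<close>. On the other hand
  the graph of \<open>g\<close> is a \<open>1/K\<close> fraction of all outcomes and carries mass at least
  \<open>1 - \<epsilon>\<close>, so the log-sum inequality applied to it and to its complement gives the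
  Fano-type bound \<open>D \<ge> (1 - \<epsilon>) log K - log 2\<close>.\<close>

lemma mult_ln_div_ge_tangent:
  fixes p q r :: real
  assumes "0 \<le> p" "0 < q" "0 < r"
  shows "p * ln r + p - r * q \<le> p * ln (p / q)"
proof (cases "p = 0")
  case True
  then show ?thesis using assms by simp
next
  case False
  with assms have p: "0 < p" by simp
  have "ln (r * q / p) \<le> r * q / p - 1"
    using p assms by (intro ln_le_minus_one) simp
  moreover have "ln (p / q) = ln r - ln (r * q / p)"
    using p assms by (simp add: ln_div ln_mult)
  ultimately have "p * (ln r + 1 - r * q / p) \<le> p * ln (p / q)"
    using p by (intro mult_left_mono) auto
  moreover have "p * (ln r + 1 - r * q / p) = p * ln r + p - r * q"
    using p by (simp add: field_simps)
  ultimately show ?thesis by simp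
qed

lemma log_sum_inequality:
  fixes P Q :: "'a \<Rightarrow> real"
  assumes "finite S" "\<And>x. x \<in> S \<Longrightarrow> 0 \<le> P x" "\<And>x. x \<in> S \<Longrightarrow> 0 < Q x"
  shows "(\<Sum>x\<in>S. P x) * ln ((\<Sum>x\<in>S. P x) / (\<Sum>x\<in>S. Q x)) \<le> (\<Sum>x\<in>S. P x * ln (P x / Q x))"
proof (cases "(\<Sum>x\<in>S. P x) = 0")
  case True
  then have "\<forall>x\<in>S. P x = 0"
    using assms sum_nonneg_eq_0_iff by blast
  then show ?thesis by (simp add: True)
next
  case False
  define r where "r = (\<Sum>x\<in>S. P x) / (\<Sum>x\<in>S. Q x)"
  from False have "S \<noteq> {}" by auto
  then have "0 < (\<Sum>x\<in>S. Q x)"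
    using assms by (intro sum_pos) auto
  moreover have "0 < (\<Sum>x\<in>S. P x)"
    using False assms by (metis less_eq_real_def sum_nonneg)
  ultimately have r: "0 < r" "r * (\<Sum>x\<in>S. Q x) = (\<Sum>x\<in>S. P x)"
    unfolding r_def by simp_all
  have "(\<Sum>x\<in>S. P x) * ln r = (\<Sum>x\<in>S. P x * ln r + P x - r * Q x)"
    using r by (simp add: sum.distrib sum_subtractf sum_distrib_left sum_distrib_right)
  also have "\<dots> \<le> (\<Sum>x\<in>S. P x * ln (P x / Q x))"
    using assms r by (intro sum_mono mult_ln_div_ge_tangent) auto
  finally show ?thesis unfolding r_def .
qed

lemma log_sum_inequality_uniform:
  fixes P :: "'a \<Rightarrow> real"
  assumes "finite S" "\<And>x. x \<in> S \<Longrightarrow> 0 \<le> P x" "0 < n"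
  shows "(\<Sum>x\<in>S. P x) * ln ((\<Sum>x\<in>S. P x) * n / card S) \<le> (\<Sum>x\<in>S. P x * ln (P x * n))"
proof -
  have "(\<Sum>x\<in>S. P x) * ln ((\<Sum>x\<in>S. P x) / (\<Sum>x\<in>S. 1 / n)) \<le> (\<Sum>x\<in>S. P x * ln (P x / (1 / n)))"
    using assms by (intro log_sum_inequality) auto
  then show ?thesis
    using assms(3) by simp
qed

lemma binary_entropy_le_ln2:
  fixes c :: real
  assumes "0 \<le> c" "c \<le> 1"
  shows "- ln 2 \<le> c * ln c + (1 - c) * ln (1 - c)"
proof -
  define P where "P b = (if b then c else 1 - c)" for b
  have "(\<Sum>b\<in>UNIV. P b) * ln ((\<Sum>b\<in>UNIV. P b) * 2 / card (UNIV :: bool set))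
        \<le> (\<Sum>b\<in>UNIV. P b * ln (P b * 2))"
    using assms by (intro log_sum_inequality_uniform) (auto simp: P_def)
  then have "0 \<le> c * ln (c * 2) + (1 - c) * ln ((1 - c) * 2)"
    by (simp add: UNIV_bool P_def)
  moreover have ln_double: "x * ln (x * 2) = x * ln x + x * ln 2" if "0 \<le> x" for x :: real
    using that by (cases "x = 0") (simp_all add: ln_mult distrib_left)
  ultimately show ?thesis
    using assms ln_double[of c] ln_double[of "1 - c"] by (simp add: algebra_simps)
qed

definition kl_uniform :: "'a set \<Rightarrow> ('a \<Rightarrow> real) \<Rightarrow> real" where
  "kl_uniform X P = (\<Sum>x\<in>X. P x * ln (P x * real (card X)))"

lemma kl_uniform_le:
  assumes "finite X" "\<And>x. x \<in> X \<Longrightarrow> 0 \<le> P x" "\<And>x. x \<in> X \<Longrightarrow> P x * real (card X) \<le> B x"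
  shows "kl_uniform X P \<le> (\<Sum>x\<in>X. P x * ln (B x))"
  unfolding kl_uniform_def
proof (rule sum_mono)
  fix x assume x: "x \<in> X"
  show "P x * ln (P x * real (card X)) \<le> P x * ln (B x)"
  proof (cases "P x = 0")
    case False
    with assms(2)[OF x] have "0 < P x" by simp
    moreover have "0 < card X"
      using x assms(1) card_gt_0_iff by blast
    ultimately show ?thesis
      using assms(3)[OF x] by (intro mult_left_mono ln_mono) auto
  qed simp
qed

lemma kl_uniform_ge_fano:
  assumes "finite X" "A \<subseteq> X" "card X = K * card A"
    and "\<And>x. x \<in> X \<Longrightarrow> 0 \<le> P x" "(\<Sum>x\<in>X. P x) = 1"
  shows "(\<Sum>x\<in>A. P x) * ln (real K) - ln 2 \<le> kl_uniform X P"
proof -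
  define c where "c = (\<Sum>x\<in>A. P x)"
  define n where "n = real (card X)"
  have "X \<noteq> {}" using assms(5) by auto
  then have n: "0 < n" using assms(1) by (simp add: n_def card_gt_0_iff)
  then have K: "0 < K" "0 < card A" using assms(3) by (simp_all add: n_def zero_less_mult_iff)
  have compl: "(\<Sum>x\<in>X - A. P x) = 1 - c"
    using sum.subset_diff[OF assms(2,1), of P] assms(5) by (simp add: c_def)
  have "0 \<le> c"
    unfolding c_def using assms(2,4) by (auto intro: sum_nonneg)
  moreover have "c \<le> 1"
    using compl assms(4) sum_nonneg[of "X - A" P] by auto
  ultimately have c: "0 \<le> c" "c \<le> 1" .
  have split: "kl_uniform X P = (\<Sum>x\<in>A. P x * ln (P x * n)) + (\<Sum>x\<in>X - A. P x * ln (P x * n))"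
    unfolding kl_uniform_def n_def using sum.subset_diff[OF assms(2,1)] by (simp add: add.commute)
  have "c * ln (c * n / card A) \<le> (\<Sum>x\<in>A. P x * ln (P x * n))"
    unfolding c_def using finite_subset[OF assms(2,1)] assms(2,4) n
    by (intro log_sum_inequality_uniform) auto
  moreover have "c * ln (c * n / card A) = c * ln c + c * ln (real K)"
    using K c by (cases "c = 0") (simp_all add: n_def assms(3) ln_mult distrib_left)
  ultimately have on_A: "c * ln c + c * ln (real K) \<le> (\<Sum>x\<in>A. P x * ln (P x * n))"
    by simp
  have "(1 - c) * ln (1 - c) \<le> (1 - c) * ln ((1 - c) * n / card (X - A))"
  proof (cases "c = 1")
    case False
    with c have pos: "0 < 1 - c" by simp
    then have "X - A \<noteq> {}" using compl by (metis less_irrefl sum.empty)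
    then have "0 < card (X - A)" "card (X - A) \<le> n"
      using assms(1) card_mono[OF assms(1), of "X - A"] by (auto simp: n_def card_gt_0_iff)
    then have "1 - c \<le> (1 - c) * n / card (X - A)"
      using pos by (simp add: le_divide_eq)
    then show ?thesis
      using pos by (intro mult_left_mono ln_mono) simp_all
  qed simp
  also have "\<dots> \<le> (\<Sum>x\<in>X - A. P x * ln (P x * n))"
    unfolding compl[symmetric] using assms(1,4) n by (intro log_sum_inequality_uniform) auto
  finally have on_compl: "(1 - c) * ln (1 - c) \<le> (\<Sum>x\<in>X - A. P x * ln (P x * n))" .
  show ?thesis
    using on_A on_compl binary_entropy_le_ln2[OF c] unfolding split c_def[symmetric] by linarith
qed

definition obs_vec_pmf :: "nat \<Rightarrow> (nat \<Rightarrow> nat set) \<Rightarrow> nat \<Rightarrow> (nat \<Rightarrow> nat) pmf" where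
  "obs_vec_pmf m Ys k = Pi_pmf {..<m} undefined (\<lambda>i. obs_pmf (Ys i) k)"

lemma joint_pmf_eq_bind_map:
  "joint_pmf K m Ys = pmf_of_set {1..K} \<bind> (\<lambda>k. map_pmf (Pair k) (obs_vec_pmf m Ys k))"
  by (simp add: joint_pmf_def obs_vec_pmf_def map_pmf_def)

lemma set_obs_vec_pmf_subset:
  assumes "\<And>i. i < m \<Longrightarrow> finite (Ys i) \<and> Ys i \<noteq> {}"
  shows "set_pmf (obs_vec_pmf m Ys k) \<subseteq> PiE {..<m} Ys"
proof -
  have "set_pmf (obs_pmf (Ys i) k) \<subseteq> Ys i" if "i < m" for i
    using assms[OF that] by (auto simp: obs_pmf_def)
  then show ?thesis
    unfolding obs_vec_pmf_def
    using set_Pi_pmf_subset'[of "{..<m}" undefined "\<lambda>i. obs_pmf (Ys i) k"]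
    by (auto simp: PiE_dflt_def PiE_def extensional_def)
qed

lemma set_joint_pmf_subset:
  assumes "0 < K" "\<And>i. i < m \<Longrightarrow> finite (Ys i) \<and> Ys i \<noteq> {}"
  shows "set_pmf (joint_pmf K m Ys) \<subseteq> {1..K} \<times> PiE {..<m} Ys"
proof -
  have "set_pmf (obs_vec_pmf m Ys k) \<subseteq> PiE {..<m} Ys" for k
    using assms(2) by (rule set_obs_vec_pmf_subset)
  then show ?thesis
    using assms(1) by (fastforce simp: joint_pmf_eq_bind_map)
qed

lemma pmf_joint_pmf:
  assumes "k \<in> {1..K}"
  shows "pmf (joint_pmf K m Ys) (k, y) = pmf (obs_vec_pmf m Ys k) y / real K"
proof -
  have pmf_pair: "pmf (map_pmf (Pair k') (obs_vec_pmf m Ys k')) (k, y)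
      = (if k' = k then pmf (obs_vec_pmf m Ys k) y else 0)" for k'
    by (auto simp: pmf_map_inj' inj_on_def intro: pmf_map_outside)
  have "{1..K} \<noteq> {}" using assms by auto
  then have "pmf (joint_pmf K m Ys) (k, y)
      = (\<Sum>k'\<in>{1..K}. pmf (map_pmf (Pair k') (obs_vec_pmf m Ys k')) (k, y)) / real K"
    by (simp add: joint_pmf_eq_bind_map pmf_bind integral_pmf_of_set)
  also have "\<dots> = pmf (obs_vec_pmf m Ys k) y / real K"
    using assms by (simp add: pmf_pair)
  finally show ?thesis .
qed

lemma pmf_obs_pmf_mult_card_le:
  assumes "finite S" "S \<noteq> {}"
  shows "pmf (obs_pmf S k) s * card S \<le> (if k \<in> S then card S else 1)"
  using assms pmf_le_1[of "return_pmf k" s]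
  by (auto simp: obs_pmf_def pmf_of_set indicator_def card_gt_0_iff)

lemma pmf_obs_vec_pmf_mult_le:
  assumes "\<And>i. i < m \<Longrightarrow> finite (Ys i) \<and> card (Ys i) = R" "1 \<le> R"
  shows "pmf (obs_vec_pmf m Ys k) y * real R ^ m \<le> (\<Prod>i<m. if k \<in> Ys i then real R else 1)"
proof (cases "\<forall>i. i \<notin> {..<m} \<longrightarrow> y i = undefined")
  case True
  have "pmf (obs_vec_pmf m Ys k) y * real R ^ m = (\<Prod>i<m. pmf (obs_pmf (Ys i) k) (y i) * card (Ys i))"
    using True assms(1) by (simp add: obs_vec_pmf_def pmf_Pi prod.distrib)
  also have "\<dots> \<le> (\<Prod>i<m. if k \<in> Ys i then real R else 1)"
  proof (rule prod_mono)
    fix i assume "i \<in> {..<m}"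
    with assms show "0 \<le> pmf (obs_pmf (Ys i) k) (y i) * card (Ys i) \<and>
        pmf (obs_pmf (Ys i) k) (y i) * card (Ys i) \<le> (if k \<in> Ys i then real R else 1)"
      using pmf_obs_pmf_mult_card_le[of "Ys i" k "y i"] by fastforce
  qed
  finally show ?thesis .
next
  case False
  have "pmf (obs_vec_pmf m Ys k) y = 0"
    unfolding obs_vec_pmf_def using False by (intro pmf_Pi_outside) auto
  then show ?thesis by (simp add: prod_nonneg)
qed

lemma sum_ln_prod_membership_eq:
  fixes Ys :: "nat \<Rightarrow> nat set"
  assumes "\<And>i. i < m \<Longrightarrow> Ys i \<subseteq> {1..K} \<and> card (Ys i) = R" "1 \<le> R"
  shows "(\<Sum>k\<in>{1..K}. ln (\<Prod>i<m. if k \<in> Ys i then real R else 1)) = real m * real R * ln (real R)"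
proof -
  have "(\<Sum>k\<in>{1..K}. ln (\<Prod>i<m. if k \<in> Ys i then real R else 1))
      = (\<Sum>k\<in>{1..K}. \<Sum>i<m. if k \<in> Ys i then ln (real R) else 0)"
    using assms(2) by (intro sum.cong refl) (subst ln_prod; auto intro: sum.cong)
  also have "\<dots> = (\<Sum>i<m. \<Sum>k\<in>{1..K}. if k \<in> Ys i then ln (real R) else 0)"
    by (rule sum.swap)
  also have "\<dots> = (\<Sum>i<m. real R * ln (real R))"
  proof (rule sum.cong)
    fix i assume "i \<in> {..<m}"
    then have "{1..K} \<inter> Ys i = Ys i" "card (Ys i) = R" using assms(1) by auto
    have "(\<Sum>k\<in>{1..K}. if k \<in> Ys i then ln (real R) else 0) = (\<Sum>k\<in>{1..K} \<inter> Ys i. ln (real R))"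
      by (rule sum.inter_restrict[symmetric]) simp
    then show "(\<Sum>k\<in>{1..K}. if k \<in> Ys i then ln (real R) else 0) = real R * ln (real R)"
      by (simp only: \<open>{1..K} \<inter> Ys i = Ys i\<close> \<open>card (Ys i) = R\<close> sum_constant)
  qed simp
  finally show ?thesis by simp
qed

lemma kl_uniform_joint_pmf_le:
  assumes "\<And>i. i < m \<Longrightarrow> Ys i \<subseteq> {1..K} \<and> card (Ys i) = R" "1 \<le> R"
  shows "kl_uniform ({1..K} \<times> PiE {..<m} Ys) (pmf (joint_pmf K m Ys))
           \<le> real m * real R * ln (real R) / real K"
proof -
  define X where "X = {1..K} \<times> PiE {..<m} Ys"
  define B where "B k = (\<Prod>i<m. if k \<in> Ys i then real R else 1)" for k
  have Ys: "finite (Ys i) \<and> card (Ys i) = R \<and> Ys i \<noteq> {}" if "i < m" for i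
    using assms that by (metis card.empty card.infinite not_one_le_zero)
  then have "finite X"
    by (auto simp: X_def intro!: finite_PiE)
  have card_X: "card X = K * R ^ m"
    using Ys by (simp add: X_def card_cartesian_product card_PiE)
  have "kl_uniform X (pmf (joint_pmf K m Ys)) \<le> (\<Sum>x\<in>X. pmf (joint_pmf K m Ys) x * ln (B (fst x)))"
  proof (rule kl_uniform_le[OF \<open>finite X\<close>])
    fix x assume "x \<in> X"
    then obtain k y where x: "x = (k, y)" "k \<in> {1..K}" by (auto simp: X_def)
    then have "pmf (joint_pmf K m Ys) x * real (card X) = pmf (obs_vec_pmf m Ys k) y * real R ^ m"
      by (simp add: pmf_joint_pmf card_X)
    also have "\<dots> \<le> B (fst x)"
      unfolding B_def x(1) fst_conv using Ys assms(2) by (intro pmf_obs_vec_pmf_mult_le) auto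
    finally show "pmf (joint_pmf K m Ys) x * real (card X) \<le> B (fst x)" .
  qed simp
  also have "\<dots> = (\<Sum>k\<in>{1..K}. (\<Sum>y\<in>PiE {..<m} Ys. pmf (obs_vec_pmf m Ys k) y) * ln (B k) / real K)"
    unfolding X_def sum.cartesian_product'
    by (intro sum.cong refl) (simp add: pmf_joint_pmf sum_distrib_right sum_divide_distrib)
  also have "\<dots> = (\<Sum>k\<in>{1..K}. ln (B k)) / real K"
  proof -
    have "(\<Sum>y\<in>PiE {..<m} Ys. pmf (obs_vec_pmf m Ys k) y) = 1" for k
      using Ys by (intro sum_pmf_eq_1 finite_PiE set_obs_vec_pmf_subset) auto
    then show ?thesis by (simp add: sum_divide_distrib)
  qed
  also have "\<dots> = real m * real R * ln (real R) / real K"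
    using sum_ln_prod_membership_eq[OF assms] by (simp add: B_def)
  finally show ?thesis unfolding X_def .
qed

lemma kl_uniform_joint_pmf_ge:
  assumes "\<And>i. i < m \<Longrightarrow> finite (Ys i) \<and> Ys i \<noteq> {}" "\<forall>y\<in>PiE {..<m} Ys. g y \<in> {1..K}"
  shows "(1 - err_prob K m Ys g) * ln (real K) - ln 2
           \<le> kl_uniform ({1..K} \<times> PiE {..<m} Ys) (pmf (joint_pmf K m Ys))"
proof -
  define Y where "Y = PiE {..<m} Ys"
  define X where "X = {1..K} \<times> Y"
  define A where "A = (\<lambda>y. (g y, y)) ` Y"
  define p where "p = pmf (joint_pmf K m Ys)"
  have "finite Y" "Y \<noteq> {}"
    using assms(1) by (auto simp: Y_def PiE_eq_empty_iff intro!: finite_PiE)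
  then have "0 < K"
    using assms(2) by (auto simp: Y_def)
  have "finite X" "A \<subseteq> X"
    using \<open>finite Y\<close> assms(2) by (auto simp: X_def A_def Y_def)
  have "card X = K * card A"
    by (simp add: X_def A_def card_cartesian_product card_image inj_on_def)
  have "(\<Sum>x\<in>X. p x) = 1"
    using \<open>finite X\<close> set_joint_pmf_subset[OF \<open>0 < K\<close> assms(1)]
    unfolding p_def X_def Y_def by (rule sum_pmf_eq_1)
  then have "1 - (\<Sum>x\<in>A. p x) = measure_pmf.prob (joint_pmf K m Ys) (X - A)"
    using sum.subset_diff[OF \<open>A \<subseteq> X\<close> \<open>finite X\<close>, of p] \<open>finite X\<close>
    by (simp add: p_def measure_measure_pmf_finite)
  also have "\<dots> \<le> err_prob K m Ys g"
    unfolding err_prob_def by (rule measure_pmf.finite_measure_mono) (auto simp: A_def X_def)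
  finally have "(1 - err_prob K m Ys g) * ln (real K) \<le> (\<Sum>x\<in>A. p x) * ln (real K)"
    using \<open>0 < K\<close> by (intro mult_right_mono) auto
  also have "\<dots> - ln 2 \<le> kl_uniform X p"
    using \<open>finite X\<close> \<open>A \<subseteq> X\<close> \<open>card X = K * card A\<close> \<open>(\<Sum>x\<in>X. p x) = 1\<close>
    by (intro kl_uniform_ge_fano) (auto simp: p_def)
  finally show ?thesis
    unfolding X_def Y_def p_def by linarith
qed

theorem theorem4:
  fixes K R m :: nat and \<epsilon> :: real
    and Ys :: "nat \<Rightarrow> nat set" and g :: "(nat \<Rightarrow> nat) \<Rightarrow> nat"
  assumes "2 \<le> R" and "R \<le> K"
    and "0 < \<epsilon>" and "\<epsilon> < 1"
    and "\<forall>i<m. Ys i \<subseteq> {1..K} \<and> card (Ys i) = R"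
    and "\<forall>y \<in> PiE {..<m} Ys. g y \<in> {1..K}"
    and "err_prob K m Ys g \<le> \<epsilon>"
  shows "int m \<ge> \<lceil>(real K / real R) * (((1 - \<epsilon>) * ln (real K) - ln 2) / ln (real R))\<rceil>"
proof -
  have Ys: "Ys i \<subseteq> {1..K} \<and> card (Ys i) = R" "finite (Ys i) \<and> Ys i \<noteq> {}" if "i < m" for i
    using assms(1,5) that by (auto intro: card_ge_0_finite)
  have "(1 - \<epsilon>) * ln (real K) - ln 2 \<le> (1 - err_prob K m Ys g) * ln (real K) - ln 2"
    using assms(1,2,7) by (intro diff_right_mono mult_right_mono) auto
  also have "\<dots> \<le> kl_uniform ({1..K} \<times> PiE {..<m} Ys) (pmf (joint_pmf K m Ys))"
    using Ys(2) assms(6) by (rule kl_uniform_joint_pmf_ge)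
  also have "\<dots> \<le> real m * real R * ln (real R) / real K"
    using Ys(1) assms(1) by (intro kl_uniform_joint_pmf_le) auto
  finally have "(real K / real R) * (((1 - \<epsilon>) * ln (real K) - ln 2) / ln (real R))
      \<le> (real K / real R) * ((real m * real R * ln (real R) / real K) / ln (real R))"
    using assms(1,2) by (intro mult_left_mono divide_right_mono) auto
  also have "\<dots> = real m"
    using assms(1,2) by (simp add: field_simps)
  finally show ?thesis
    by (simp add: ceiling_le_iff)
qed

end
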